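(* Let $X$ be a quadratic planar vector field and, for $\epsilon\in\mathbb{R}$, let $\Phi_\epsilon(\mathbf{x})=\mathbf{x}+2\epsilon\left(I-\epsilon\,\mathrm{D}X(\mathbf{x})\right)^{-1}X(\mathbf{x})$ be its associated Kahan-Hirota-Kimura (KHK) map. Let $C$ be a closed curve invariant under $\Phi_\epsilon$. Suppose that $\Phi_\epsilon|_C$ is conjugate to a rotation with rotation number $\rho_\epsilon$. Then $\Phi_{-\epsilon}|_C$ is conjugate to a rotation with rotation number $\rho_{-\epsilon}=1-\rho_\epsilon$.
   Context: $\mathrm{D}X$ denotes the Jacobian matrix of $X$ and $I$ the $2\times 2$ identity matrix. A homeomorphism of a closed curve (a topological circle) conjugate to a rotation by angle $\theta\in[0,2\pi)$ is said to have rotation number $\theta/(2\pi)\in[0,1)$. *)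

theory Defs
  imports "HOL-Analysis.Analysis"
begin

definition quadratic_vector_field :: "(real^2 \<Rightarrow> real^2) \<Rightarrow> bool" where
  "quadratic_vector_field X \<longleftrightarrow>
     (\<exists>a b c d e f :: 2 \<Rightarrow> real. \<forall>x. \<forall>i.
        X x $ i = a i + b i * x$1 + c i * x$2 + d i * (x$1)^2 + e i * x$1 * x$2 + f i * (x$2)^2)"

definition khk :: "(real^2 \<Rightarrow> real^2) \<Rightarrow> real \<Rightarrow> real^2 \<Rightarrow> real^2" where
  "khk X \<epsilon> x = x + (2 * \<epsilon>) *\<^sub>R (matrix_inv (mat 1 - \<epsilon> *\<^sub>R jacobian X (at x)) *v X x)"

definition rot :: "real \<Rightarrow> real^2 \<Rightarrow> real^2" where
  "rot \<theta> v = (\<chi> i. if i = 1 then cos \<theta> * v$1 - sin \<theta> * v$2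
                        else sin \<theta> * v$1 + cos \<theta> * v$2)"

abbreviation S1 :: "(real^2) set" where "S1 \<equiv> sphere 0 1"

definition conj_to_rotation :: "(real^2 \<Rightarrow> real^2) \<Rightarrow> (real^2) set \<Rightarrow>
      (real^2 \<Rightarrow> real^2) \<Rightarrow> (real^2 \<Rightarrow> real^2) \<Rightarrow> real \<Rightarrow> bool" where
  "conj_to_rotation f C h g \<theta> \<longleftrightarrow>
     homeomorphism C S1 h g \<and> (\<forall>x\<in>C. f x \<in> C \<and> h (f x) = rot \<theta> (h x))"

end

theory Submission
  imports Defs
begin

text \<open>For quadratic X the KHK map is the linearly implicit scheme y - x = 2 \<epsilon> X(x, y), where
X(x, y) = X x + 1/2 DX(x)(y - x) is the polarization of X and is symmetric in x and y.
Exchanging x and y shows that the KHK map with step -\<epsilon> inverts the one with step \<epsilon>.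
The inverse of a map conjugate to the rotation by \<theta> is conjugate, through the same
homeomorphism, to the rotation by -\<theta>, i.e. by 2\<pi> - \<theta>.\<close>

lemma invertible_matrix_inv:
  fixes A :: "'a::semiring_1^'n^'n"
  assumes "invertible A"
  shows "A ** matrix_inv A = mat 1" and "matrix_inv A ** A = mat 1"
proof -
  have "A ** matrix_inv A = mat 1 \<and> matrix_inv A ** A = mat 1"
    using assms unfolding invertible_def matrix_inv_def by (rule someI_ex)
  then show "A ** matrix_inv A = mat 1" and "matrix_inv A ** A = mat 1" by auto
qed

lemma matrix_inv_mult_eq_iff:
  fixes A :: "'a::comm_semiring_1^'n^'n"
  assumes "invertible A"
  shows "matrix_inv A *v w = u \<longleftrightarrow> A *v u = w"
  using invertible_matrix_inv[OF assms]
  by (metis matrix_vector_mul_assoc matrix_vector_mul_lid)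

lemma jacobian_quadratic:
  fixes X :: "real^2 \<Rightarrow> real^2"
  assumes X: "\<forall>x i. X x $ i = a i + b i * x$1 + c i * x$2 + d i * (x$1)^2 + e i * x$1 * x$2 + f i * (x$2)^2"
  shows "jacobian X (at x) *v v =
    (\<chi> i. b i * v$1 + c i * v$2 + 2 * d i * x$1 * v$1 + e i * (x$1 * v$2 + x$2 * v$1) + 2 * f i * x$2 * v$2)"
    (is "_ = ?DX v")
proof -
  let ?vec = "\<lambda>k :: 2 \<Rightarrow> real. \<chi> i. k i"
  have X_eq: "X = (\<lambda>x. ?vec a + x$1 *\<^sub>R ?vec b + x$2 *\<^sub>R ?vec c + (x$1)^2 *\<^sub>R ?vec d
      + (x$1 * x$2) *\<^sub>R ?vec e + (x$2)^2 *\<^sub>R ?vec f)"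
    using X by (auto simp: vec_eq_iff algebra_simps)
  have nth_deriv: "((\<lambda>x::real^2. x$i) has_derivative (\<lambda>v. v$i)) (at x)" for i
    by (rule bounded_linear_imp_has_derivative[OF bounded_linear_vec_nth])
  have deriv: "(X has_derivative ?DX) (at x)"
    unfolding X_eq
    by (rule derivative_eq_intros nth_deriv refl)+ (simp add: vec_eq_iff fun_eq_iff)
  then have "jacobian X (at x) = matrix ?DX"
    unfolding jacobian_def by (simp add: frechet_derivative_at[symmetric])
  then show ?thesis
    using deriv by (simp add: has_derivative_linear)
qed

definition polarization :: "(real^2 \<Rightarrow> real^2) \<Rightarrow> real^2 \<Rightarrow> real^2 \<Rightarrow> real^2" where
  "polarization X x y = X x + (1/2) *\<^sub>R (jacobian X (at x) *v (y - x))"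

lemma polarization_commute:
  assumes "quadratic_vector_field X"
  shows "polarization X x y = polarization X y x"
proof -
  obtain a b c d e f :: "2 \<Rightarrow> real" where
    X: "\<forall>x i. X x $ i = a i + b i * x$1 + c i * x$2 + d i * (x$1)^2 + e i * x$1 * x$2 + f i * (x$2)^2"
    using assms unfolding quadratic_vector_field_def by blast
  show ?thesis
    unfolding polarization_def vec_eq_iff
    by (simp add: jacobian_quadratic[OF X] X algebra_simps power2_eq_square)
qed

lemma khk_eq_iff:
  assumes "invertible (mat 1 - \<epsilon> *\<^sub>R jacobian X (at x))"
  shows "khk X \<epsilon> x = y \<longleftrightarrow> y - x = (2 * \<epsilon>) *\<^sub>R polarization X x y"
proof -
  let ?J = "jacobian X (at x)"
  have "khk X \<epsilon> x = y \<longleftrightarrow> matrix_inv (mat 1 - \<epsilon> *\<^sub>R ?J) *v ((2 * \<epsilon>) *\<^sub>R X x) = y - x"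
    unfolding khk_def by (auto simp: matrix_vector_mult_scaleR)
  also have "\<dots> \<longleftrightarrow> (mat 1 - \<epsilon> *\<^sub>R ?J) *v (y - x) = (2 * \<epsilon>) *\<^sub>R X x"
    by (rule matrix_inv_mult_eq_iff[OF assms])
  also have "\<dots> \<longleftrightarrow> y - x = (2 * \<epsilon>) *\<^sub>R polarization X x y"
    unfolding polarization_def
    by (auto simp: matrix_vector_mult_diff_rdistrib scaleR_matrix_vector_assoc algebra_simps)
  finally show ?thesis .
qed

lemma khk_neg_khk:
  assumes "quadratic_vector_field X"
    and "invertible (mat 1 - \<epsilon> *\<^sub>R jacobian X (at x))"
    and "invertible (mat 1 - (- \<epsilon>) *\<^sub>R jacobian X (at (khk X \<epsilon> x)))"
  shows "khk X (- \<epsilon>) (khk X \<epsilon> x) = x"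
proof -
  define y where "y = khk X \<epsilon> x"
  have "y - x = (2 * \<epsilon>) *\<^sub>R polarization X x y"
    using khk_eq_iff[OF assms(2)] y_def by blast
  then have "x - y = (2 * - \<epsilon>) *\<^sub>R polarization X y x"
    using polarization_commute[OF assms(1)] by (simp add: algebra_simps)
  then show ?thesis
    using khk_eq_iff[OF assms(3)] y_def by blast
qed

lemma norm_rot: "norm (rot \<theta> v) = norm v"
proof -
  have "(cos \<theta> * v$1 - sin \<theta> * v$2)^2 + (sin \<theta> * v$1 + cos \<theta> * v$2)^2 = (v$1)^2 + (v$2)^2"
    using sin_cos_squared_add[of \<theta>] by algebra
  then show ?thesis
    by (simp add: rot_def norm_vec_def L2_set_def sum_2)
qed

lemma rot_rot: "rot s (rot t v) = rot (s + t) v"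
  unfolding rot_def vec_eq_iff forall_2 by (simp add: cos_add sin_add algebra_simps)

lemma rot_zero: "rot 0 v = v"
  unfolding rot_def vec_eq_iff forall_2 by simp

lemma rot_periodic: "rot (\<theta> + 2 * pi) = rot \<theta>"
  unfolding rot_def by (simp add: fun_eq_iff)

lemma conj_to_rotation_inverse:
  assumes conj: "conj_to_rotation f C h g \<theta>" and inverse: "\<forall>x\<in>C. f' (f x) = x"
  shows "conj_to_rotation f' C h g (- \<theta>)"
proof -
  have hom: "homeomorphism C S1 h g" and f: "\<forall>x\<in>C. f x \<in> C \<and> h (f x) = rot \<theta> (h x)"
    using conj unfolding conj_to_rotation_def by auto
  have "f' y \<in> C \<and> h (f' y) = rot (- \<theta>) (h y)" if "y \<in> C" for y
  proof -
    define x where "x = g (rot (- \<theta>) (h y))"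
    have "rot (- \<theta>) (h y) \<in> S1"
      using hom \<open>y \<in> C\<close> by (auto simp: homeomorphism_def norm_rot)
    then have "x \<in> C" and hx: "h x = rot (- \<theta>) (h y)"
      using hom unfolding x_def homeomorphism_def by auto
    then have "h (f x) = h y"
      using f by (simp add: rot_rot rot_zero)
    then have "f x = y"
      using hom f \<open>x \<in> C\<close> \<open>y \<in> C\<close> unfolding homeomorphism_def by metis
    then show ?thesis
      using inverse \<open>x \<in> C\<close> hx by auto
  qed
  then show ?thesis
    using hom unfolding conj_to_rotation_def by blast
qed

lemma conj_to_rotation_periodic:
  "conj_to_rotation f C h g (\<theta> + 2 * pi) \<longleftrightarrow> conj_to_rotation f C h g \<theta>"
  unfolding conj_to_rotation_def rot_periodic ..

theorem lemma2:
  fixes X :: "real^2 \<Rightarrow> real^2" and \<epsilon> \<rho> :: real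
    and C :: "(real^2) set" and h g :: "real^2 \<Rightarrow> real^2"
  assumes quad: "quadratic_vector_field X"
    and closed_curve: "C homeomorphic S1"
    and defined_eps: "\<forall>x\<in>C. invertible (mat 1 - \<epsilon> *\<^sub>R jacobian X (at x))"
    and defined_neg_eps: "\<forall>x\<in>C. invertible (mat 1 - (- \<epsilon>) *\<^sub>R jacobian X (at x))"
    and invariant: "khk X \<epsilon> ` C \<subseteq> C"
    and rho: "0 \<le> \<rho>" "\<rho> < 1"
    and conj: "conj_to_rotation (khk X \<epsilon>) C h g (2 * pi * \<rho>)"
  shows "conj_to_rotation (khk X (- \<epsilon>)) C h g (2 * pi * (1 - \<rho>))"
proof -
  have "\<forall>x\<in>C. khk X (- \<epsilon>) (khk X \<epsilon> x) = x"
    using khk_neg_khk[OF quad] defined_eps defined_neg_eps invariant by blast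
  then have "conj_to_rotation (khk X (- \<epsilon>)) C h g (- (2 * pi * \<rho>) + 2 * pi)"
    using conj_to_rotation_inverse[OF conj] conj_to_rotation_periodic by blast
  moreover have "- (2 * pi * \<rho>) + 2 * pi = 2 * pi * (1 - \<rho>)"
    by (simp add: algebra_simps)
  ultimately show ?thesis
    by simp
qed

end
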